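(* Let $\mathbb P$ be a forcing by Silver trees and $n<\omega$. Then: (i) if $T\in\mathbb P$ and $s\in 2^{<\omega}$ then $T\to s\in\mathbb P$; (ii) if $T$ is a Silver tree and $s_0\in 2^n$, then $T\to s_0\in\mathbb P$ if and only if $T\in\mathrm{Col}_n(\mathbb P)$; (iii) if $U\in\mathrm{Col}_n(\mathbb P)$, $s_0\in 2^n$, $S\in\mathbb P$ and $S\subseteq U\to s_0$, then there is $V\in\mathrm{Col}_n(\mathbb P)$ such that $V\sqsubseteq_n U$ and $V\to s_0=S$; (iv) if $U\in\mathrm{Col}_n(\mathbb P)$ and $D\subseteq\mathbb P$ is open dense in $\mathbb P$, then there is $V\in\mathrm{Col}_n(\mathbb P)$ such that $V\sqsubseteq_n U$ and $V\to s\in D$ for all $s\in 2^n$.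
   Context: $2^{<\omega}$ is the set of finite binary strings, $2^n$ those of length $n$, $s^\frown i$ the extension by digit $i$. A set $T\subseteq 2^{<\omega}$ is a Silver tree if there are strings $u_0,u_1,\dots$ such that $T$ consists exactly of all strings $u_0{}^\frown i_0{}^\frown u_1{}^\frown i_1{}^\frown\cdots{}^\frown u_m{}^\frown i_m$ ($m<\omega$, $i_k\in\{0,1\}$) and all their initial segments; $\mathrm{stem}(T)=u_0$; $\mathrm{spl}_m(T)=|u_0|+1+\dots+|u_{m-1}|+1+|u_m|$. For $u\in T$, $T\restriction u=\{t\in T: u\subseteq t\text{ or }t\subseteq u\}$; $T\to i=T\restriction(\mathrm{stem}(T)^\frown i)$, $T\to s=(\cdots(T\to s(0))\cdots)\to s(|s|-1)$, $T\to\Lambda=T$. String action: for $s\in 2^m$, $t\in 2^k$, $m\le k$: $(s\cdot t)(j)=t(j)+s(j)\bmod 2$ for $j<m$, $=t(j)$ otherwise; if $m>k$, $s\cdot t=(s\restriction k)\cdot t$; $s\cdot T=\{s\cdot t:t\in T\}$. A forcing by Silver trees is a set $\mathbb P$ of Silver trees closed under $T\mapsto T\restriction u$ ($u\in T$) and $T\mapsto\sigma\cdot T$ ($\sigma\in 2^{<\omega}$), ordered by inclusion (smaller is stronger); $D\subseteq\mathbb P$ is open dense if every element of $\mathbb P$ has a subset in $D$ and $D$ is closed under subsets within $\mathbb P$. $S\sqsubseteq_n T$ means $S\subseteq T$ and $\mathrm{spl}_k(S)=\mathrm{spl}_k(T)$ for all $k<n$. $\mathrm{Col}_n(\mathbb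 P)$ is the set of all Silver trees $T$ such that $T\to s\in\mathbb P$ for all $s\in 2^n$. *)

theory Defs
  imports "HOL-Library.Sublist"
begin

text \<open>Binary strings are lists of booleans (False = digit 0, True = digit 1).\<close>

definition sil_word :: "(nat \<Rightarrow> bool list) \<Rightarrow> (nat \<Rightarrow> bool) \<Rightarrow> nat \<Rightarrow> bool list" where
  "sil_word u ds m = concat (map (\<lambda>k. u k @ [ds k]) [0..<Suc m])"

definition silver_tree_of :: "(nat \<Rightarrow> bool list) \<Rightarrow> bool list set" where
  "silver_tree_of u = {t. \<exists>m ds. prefix t (sil_word u ds m)}"

definition silver_tree :: "bool list set \<Rightarrow> bool" where
  "silver_tree T \<longleftrightarrow> (\<exists>u. T = silver_tree_of u)"

definition sil_seq :: "bool list set \<Rightarrow> nat \<Rightarrow> bool list" where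
  "sil_seq T = (SOME u. T = silver_tree_of u)"

definition stem :: "bool list set \<Rightarrow> bool list" where
  "stem T = sil_seq T 0"

definition spl :: "nat \<Rightarrow> bool list set \<Rightarrow> nat" where
  "spl m T = (\<Sum>k<m. length (sil_seq T k) + 1) + length (sil_seq T m)"

definition restr :: "bool list set \<Rightarrow> bool list \<Rightarrow> bool list set" where
  "restr T u = {t \<in> T. prefix u t \<or> prefix t u}"

definition to1 :: "bool list set \<Rightarrow> bool \<Rightarrow> bool list set" where
  "to1 T i = restr T (stem T @ [i])"

definition to :: "bool list set \<Rightarrow> bool list \<Rightarrow> bool list set" where
  "to T s = fold (\<lambda>i S. to1 S i) s T"

definition act :: "bool list \<Rightarrow> bool list \<Rightarrow> bool list" where
  "act s t = map (\<lambda>j. if j < length s then (t ! j \<noteq> s ! j) else t ! j) [0..<length t]"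

definition act_tree :: "bool list \<Rightarrow> bool list set \<Rightarrow> bool list set" where
  "act_tree s T = act s ` T"

definition silver_forcing :: "bool list set set \<Rightarrow> bool" where
  "silver_forcing P \<longleftrightarrow>
     (\<forall>T\<in>P. silver_tree T) \<and>
     (\<forall>T\<in>P. \<forall>u\<in>T. restr T u \<in> P) \<and>
     (\<forall>T\<in>P. \<forall>\<sigma>. act_tree \<sigma> T \<in> P)"

definition open_dense :: "bool list set set \<Rightarrow> bool list set set \<Rightarrow> bool" where
  "open_dense P D \<longleftrightarrow> D \<subseteq> P \<and> (\<forall>T\<in>P. \<exists>S\<in>D. S \<subseteq> T) \<and>
     (\<forall>S\<in>D. \<forall>S'\<in>P. S' \<subseteq> S \<longrightarrow> S' \<in> D)"

definition sqsub :: "nat \<Rightarrow> bool list set \<Rightarrow> bool list set \<Rightarrow> bool" where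
  "sqsub n S T \<longleftrightarrow> S \<subseteq> T \<and> (\<forall>k<n. spl k S = spl k T)"

definition Col :: "nat \<Rightarrow> bool list set set \<Rightarrow> bool list set set" where
  "Col n P = {T. silver_tree T \<and> (\<forall>s. length s = n \<longrightarrow> to T s \<in> P)}"

end

theory Submission
  imports Defs
begin

text \<open>
  A Silver tree is determined by its sequence of gap strings \<open>u\<^sub>0, u\<^sub>1, \<dots>\<close>, and
  \<open>T \<rightarrow> i\<close> is the Silver tree with gaps \<open>u\<^sub>0 i u\<^sub>1, u\<^sub>2, u\<^sub>3, \<dots>\<close>. Hence the trees
  \<open>T \<rightarrow> s\<close> with \<open>|s| = n\<close> have gap sequences differing only in their first entries,
  which all have the same length, so each \<open>T \<rightarrow> s\<close> is the image of \<open>T \<rightarrow> s\<^sub>0\<close> under the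
  action of a string; as \<open>T \<rightarrow> i\<close> is a restriction of \<open>T\<close>, this gives (i) and (ii).
  For (iii), write \<open>S\<close> with gaps \<open>v\<^sub>0, v\<^sub>1, \<dots>\<close>, where \<open>v\<^sub>0\<close> extends the stem of
  \<open>U \<rightarrow> s\<^sub>0\<close> by some \<open>r\<close>; the tree with gaps \<open>u\<^sub>0, \<dots>, u\<^sub>n\<^sub>-\<^sub>1, u\<^sub>n r, v\<^sub>1, v\<^sub>2, \<dots>\<close>
  has \<open>V \<rightarrow> s\<^sub>0 = S\<close> and every \<open>V \<rightarrow> s\<close> a translate of \<open>S\<close> contained in \<open>U \<rightarrow> s\<close>.
  Part (iv) follows by applying (iii) to the \<open>2\<^sup>n\<close> strings one after the other: later
  steps only shrink the earlier \<open>V \<rightarrow> s\<close>, and \<open>D\<close> is open.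
\<close>

lemma sil_word_Suc:
  "sil_word u ds (Suc m) = u 0 @ ds 0 # sil_word (u \<circ> Suc) (ds \<circ> Suc) m"
proof -
  have "[0..<Suc (Suc m)] = 0 # map Suc [0..<Suc m]"
    by (simp add: map_Suc_upt upt_conv_Cons del: upt_Suc)
  then show ?thesis by (simp add: sil_word_def comp_def del: upt_Suc)
qed

lemma mem_silver_tree_of_iff:
  "t \<in> silver_tree_of u \<longleftrightarrow>
     prefix t (u 0) \<or> (\<exists>i t'. t = u 0 @ i # t' \<and> t' \<in> silver_tree_of (u \<circ> Suc))"
  (is "_ \<longleftrightarrow> ?stem \<or> ?branch")
proof
  assume "t \<in> silver_tree_of u"
  then obtain m ds where t: "prefix t (sil_word u ds m)"
    by (auto simp: silver_tree_of_def)
  have Nil: "[] \<in> silver_tree_of (u \<circ> Suc)"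
    by (auto simp: silver_tree_of_def)
  show "?stem \<or> ?branch"
  proof (cases m)
    case 0
    with t have "prefix t (u 0 @ [ds 0])" by (simp add: sil_word_def)
    with Nil show ?thesis by (auto simp: prefix_append prefix_Cons)
  next
    case (Suc m')
    with t have "prefix t (u 0 @ ds 0 # sil_word (u \<circ> Suc) (ds \<circ> Suc) m')"
      by (simp add: sil_word_Suc)
    then show ?thesis by (auto simp: prefix_append prefix_Cons silver_tree_of_def)
  qed
next
  assume "?stem \<or> ?branch"
  then show "t \<in> silver_tree_of u"
  proof
    assume "prefix t (u 0)"
    then have "prefix t (sil_word u ds 0)" for ds by (simp add: sil_word_def)
    then show ?thesis by (auto simp: silver_tree_of_def)
  next
    assume ?branch
    then obtain i t' m ds where t: "t = u 0 @ i # t'"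
      and t': "prefix t' (sil_word (u \<circ> Suc) ds m)"
      by (auto simp: silver_tree_of_def)
    have "sil_word u (case_nat i ds) (Suc m) = u 0 @ i # sil_word (u \<circ> Suc) ds m"
      by (simp add: sil_word_Suc comp_def)
    with t t' have "prefix t (sil_word u (case_nat i ds) (Suc m))" by simp
    then show ?thesis by (auto simp: silver_tree_of_def)
  qed
qed

lemma prefix_stem_mem_silver_tree_of: "prefix t (u 0) \<Longrightarrow> t \<in> silver_tree_of u"
  by (simp add: mem_silver_tree_of_iff[of t])

lemma mem_silver_tree_ofE:
  assumes "t \<in> silver_tree_of u"
  obtains "prefix t (u 0)" | i t' where "t = u 0 @ i # t'" "t' \<in> silver_tree_of (u \<circ> Suc)"
  using assms mem_silver_tree_of_iff[of t u] by blast

lemma branch_mem_silver_tree_of_iff: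
  "u 0 @ i # t \<in> silver_tree_of u \<longleftrightarrow> t \<in> silver_tree_of (u \<circ> Suc)"
  by (subst mem_silver_tree_of_iff) (auto dest: prefix_length_le)

lemma silver_tree_of_prefix_closed:
  "prefix t t' \<Longrightarrow> t' \<in> silver_tree_of u \<Longrightarrow> t \<in> silver_tree_of u"
  by (auto simp: silver_tree_of_def intro: prefix_order.trans)

lemma mem_silver_tree_of_comparable_stem:
  "t \<in> silver_tree_of u \<Longrightarrow> prefix t (u 0) \<or> prefix (u 0) t"
  by (erule mem_silver_tree_ofE) auto

lemma stem_snoc_mem_silver_tree_of: "u 0 @ [i] \<in> silver_tree_of u"
  using branch_mem_silver_tree_of_iff[of u i "[]"] prefix_stem_mem_silver_tree_of[of "[]"]
  by simp

lemma prefix_stem_if_splitting: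
  assumes "w @ [False] \<in> silver_tree_of u" "w @ [True] \<in> silver_tree_of u"
  shows "prefix (u 0) w"
proof -
  have "prefix (w @ [b]) (u 0) \<or> prefix (u 0) w" if "w @ [b] \<in> silver_tree_of u" for b
  proof (rule mem_silver_tree_ofE[OF that])
    fix i t' assume "w @ [b] = u 0 @ i # t'"
    then show ?thesis by (cases t' rule: rev_cases) auto
  qed simp
  moreover have "\<not> (prefix (w @ [False]) (u 0) \<and> prefix (w @ [True]) (u 0))"
    by (auto simp: prefix_def)
  ultimately show ?thesis using assms by blast
qed

lemma prefix_stem_if_silver_tree_of_subset:
  "silver_tree_of v \<subseteq> silver_tree_of w \<Longrightarrow> prefix (w 0) (v 0)"
  using prefix_stem_if_splitting stem_snoc_mem_silver_tree_of by blast

lemma stem_eq_if_silver_tree_of_eq: "silver_tree_of u = silver_tree_of v \<Longrightarrow> u 0 = v 0"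
  by (metis prefix_stem_if_silver_tree_of_subset prefix_order.antisym order_refl)

lemma silver_tree_of_inj: "inj silver_tree_of"
proof (rule injI, rule ext)
  fix u v :: "nat \<Rightarrow> bool list" and k
  assume "silver_tree_of u = silver_tree_of v"
  then show "u k = v k"
  proof (induction k arbitrary: u v)
    case 0
    then show ?case by (rule stem_eq_if_silver_tree_of_eq)
  next
    case (Suc k)
    from Suc.prems have "u 0 = v 0" by (rule stem_eq_if_silver_tree_of_eq)
    with Suc.prems have "silver_tree_of (u \<circ> Suc) = silver_tree_of (v \<circ> Suc)"
      using branch_mem_silver_tree_of_iff[of u True] branch_mem_silver_tree_of_iff[of v True]
      by (simp add: set_eq_iff)
    then have "(u \<circ> Suc) k = (v \<circ> Suc) k" by (rule Suc.IH)
    then show ?case by simp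
  qed
qed

lemma sil_seq_silver_tree_of: "sil_seq (silver_tree_of u) = u"
proof -
  have "silver_tree_of u = silver_tree_of (sil_seq (silver_tree_of u))"
    unfolding sil_seq_def by (rule someI[of _ u]) simp
  then show ?thesis by (rule injD[OF silver_tree_of_inj, symmetric])
qed

lemma stem_silver_tree_of: "stem (silver_tree_of u) = u 0"
  by (simp add: stem_def sil_seq_silver_tree_of)

lemma spl_silver_tree_of:
  "spl m (silver_tree_of u) = (\<Sum>k<m. length (u k) + 1) + length (u m)"
  by (simp add: spl_def sil_seq_silver_tree_of)

definition to1_seq :: "(nat \<Rightarrow> bool list) \<Rightarrow> bool \<Rightarrow> nat \<Rightarrow> bool list" where
  "to1_seq u i = case_nat (u 0 @ i # u 1) (u \<circ> Suc \<circ> Suc)"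

lemma to1_seq_0 [simp]: "to1_seq u i 0 = u 0 @ i # u 1"
  by (simp add: to1_seq_def)

lemma to1_seq_Suc [simp]: "to1_seq u i (Suc k) = u (Suc (Suc k))"
  by (simp add: to1_seq_def)

fun to_seq :: "(nat \<Rightarrow> bool list) \<Rightarrow> bool list \<Rightarrow> nat \<Rightarrow> bool list" where
  "to_seq u [] = u"
| "to_seq u (i # s) = to_seq (to1_seq u i) s"

lemma comp_Suc_fun_upd_0 [simp]: "f(0 := x) \<circ> Suc = f \<circ> Suc"
  by auto

lemma append_mem_silver_tree_of_iff:
  assumes "v 0 = a @ w"
  shows "a @ t \<in> silver_tree_of v \<longleftrightarrow> t \<in> silver_tree_of (v(0 := w))"
  using assms
  by (simp add: mem_silver_tree_of_iff[of "a @ t" v] mem_silver_tree_of_iff[of t "v(0 := w)"])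

lemma to1_silver_tree_of: "to1 (silver_tree_of u) i = silver_tree_of (to1_seq u i)"
proof (intro set_eqI)
  fix t
  have branch: "u 0 @ i # t' \<in> silver_tree_of (to1_seq u i) \<longleftrightarrow>
      t' \<in> silver_tree_of (u \<circ> Suc)" for t'
  proof -
    have "(to1_seq u i)(0 := u 1) = u \<circ> Suc"
      by (simp add: fun_eq_iff to1_seq_def split: nat.split)
    then show ?thesis using append_mem_silver_tree_of_iff[of "to1_seq u i" "u 0 @ [i]" "u 1" t']
      by simp
  qed
  consider "prefix t (u 0 @ [i])" | t' where "t = u 0 @ i # t'"
    | "\<not> prefix t (u 0 @ [i])" "\<not> prefix (u 0 @ [i]) t"
    by (auto simp: prefix_def)
  then show "t \<in> to1 (silver_tree_of u) i \<longleftrightarrow> t \<in> silver_tree_of (to1_seq u i)"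
  proof cases
    case 1
    then have "t \<in> silver_tree_of u" "t \<in> silver_tree_of (to1_seq u i)"
      by (auto intro: silver_tree_of_prefix_closed stem_snoc_mem_silver_tree_of
          prefix_stem_mem_silver_tree_of prefix_order.trans)
    with 1 show ?thesis by (simp add: to1_def restr_def stem_silver_tree_of)
  next
    case 2
    then show ?thesis
      by (simp add: to1_def restr_def stem_silver_tree_of branch branch_mem_silver_tree_of_iff)
  next
    case 3
    have "t \<notin> silver_tree_of (to1_seq u i)"
    proof
      assume "t \<in> silver_tree_of (to1_seq u i)"
      then have "prefix t (u 0 @ i # u 1) \<or> prefix (u 0 @ i # u 1) t"
        using mem_silver_tree_of_comparable_stem[of t "to1_seq u i"] by simp
      moreover have "prefix (u 0 @ [i]) (u 0 @ i # u 1)" by simp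
      ultimately show False using 3 prefix_same_cases prefix_order.trans by blast
    qed
    with 3 show ?thesis by (simp add: to1_def restr_def stem_silver_tree_of)
  qed
qed

lemma to_Nil [simp]: "to T [] = T"
  by (simp add: to_def)

lemma to_Cons [simp]: "to T (i # s) = to (to1 T i) s"
  by (simp add: to_def)

lemma to_silver_tree_of: "to (silver_tree_of u) s = silver_tree_of (to_seq u s)"
  by (induction s arbitrary: u) (simp_all add: to1_silver_tree_of)

lemma restr_subset: "restr T a \<subseteq> T"
  by (auto simp: restr_def)

lemma restr_restr: "prefix a b \<Longrightarrow> restr (restr T a) b = restr T b"
  unfolding restr_def using prefix_same_cases prefix_order.trans by blast

lemma restr_mono: "T' \<subseteq> T \<Longrightarrow> prefix a b \<Longrightarrow> restr T' b \<subseteq> restr T a"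
  unfolding restr_def using prefix_same_cases prefix_order.trans by blast

lemma restr_stem_silver_tree_of: "restr (silver_tree_of u) (u 0) = silver_tree_of u"
  using mem_silver_tree_of_comparable_stem by (auto simp: restr_def)

lemma to_subset: "to T s \<subseteq> T"
proof (induction s arbitrary: T)
  case (Cons i s)
  then show ?case using restr_subset[of T] by (auto simp: to1_def)
qed simp

lemma prefix_stem_to_seq: "prefix (u 0) (to_seq u s 0)"
proof (induction s arbitrary: u)
  case (Cons i s)
  then show ?case using Cons.IH[of "to1_seq u i"] by (auto dest: append_prefixD)
qed simp

lemma to_eq_restr: "to (silver_tree_of u) s = restr (silver_tree_of u) (to_seq u s 0)"
proof (induction s arbitrary: u)
  case Nil
  then show ?case by (simp add: restr_stem_silver_tree_of)
next
  case (Cons i s)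
  have "prefix (u 0 @ [i]) (to_seq (to1_seq u i) s 0)"
    using prefix_stem_to_seq[of "to1_seq u i" s] append_prefixD[of "u 0 @ [i]" "u 1"] by simp
  then show ?case using Cons.IH[of "to1_seq u i"]
    by (simp add: to1_silver_tree_of[symmetric] to1_def stem_silver_tree_of restr_restr)
qed

lemma to_seq_Suc: "to_seq u s (Suc k) = u (length s + Suc k)"
  by (induction s arbitrary: u) simp_all

lemma to_seq_eq_fun_upd_0:
  assumes "length s = length s'"
  shows "to_seq u s' = (to_seq u s)(0 := to_seq u s' 0)"
proof
  fix k
  show "to_seq u s' k = ((to_seq u s)(0 := to_seq u s' 0)) k"
    using assms by (cases k) (simp_all add: to_seq_Suc)
qed

lemma length_to_seq:
  assumes "\<And>k. length (u k) = length (u' k)" and "length s = length s'"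
  shows "length (to_seq u s k) = length (to_seq u' s' k)"
  using assms
proof (induction s arbitrary: s' u u' k)
  case (Cons i s)
  then obtain j s'' where "s' = j # s''" "length s = length s''"
    by (cases s') auto
  moreover have "length (to1_seq u i k) = length (to1_seq u' j k)" for k
    using Cons.prems(1) by (cases k) simp_all
  ultimately show ?case using Cons.IH by simp
qed simp

lemma to_seq_0_append:
  assumes "\<And>k. k < length s \<Longrightarrow> v k = u k" and "v (length s) = u (length s) @ r"
  shows "to_seq v s 0 = to_seq u s 0 @ r"
  using assms
proof (induction s arbitrary: u v)
  case (Cons i s)
  have "to1_seq v i k = to1_seq u i k" if "k < length s" for k
    using Cons.prems(1) that by (cases k) simp_all
  moreover have "to1_seq v i (length s) = to1_seq u i (length s) @ r"
    using Cons.prems by (cases "length s") simp_all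
  ultimately show ?case using Cons.IH by simp
qed simp

lemma mem_to_silver_tree_of:
  "t \<in> silver_tree_of u \<Longrightarrow> \<exists>s. length s = n \<and> t \<in> to (silver_tree_of u) s"
proof (induction n arbitrary: u)
  case (Suc n)
  from Suc.prems have "\<exists>i. t \<in> to1 (silver_tree_of u) i"
    by (cases rule: mem_silver_tree_ofE)
      (use Suc.prems in \<open>auto simp: to1_def restr_def stem_silver_tree_of\<close>)
  then obtain i where "t \<in> silver_tree_of (to1_seq u i)"
    by (auto simp: to1_silver_tree_of)
  then obtain s where "length s = n" "t \<in> to (silver_tree_of (to1_seq u i)) s"
    using Suc.IH by blast
  then show ?case by (intro exI[of _ "i # s"]) (simp add: to1_silver_tree_of)
qed simp

lemma length_act [simp]: "length (act \<sigma> t) = length t"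
  by (simp add: act_def)

lemma nth_act:
  "j < length t \<Longrightarrow> act \<sigma> t ! j = (if j < length \<sigma> then t ! j \<noteq> \<sigma> ! j else t ! j)"
  by (simp add: act_def)

lemma act_act [simp]: "act \<sigma> (act \<sigma> t) = t"
  by (rule nth_equalityI) (auto simp: nth_act)

lemma act_append: "length \<sigma> \<le> length t \<Longrightarrow> act \<sigma> (t @ w) = act \<sigma> t @ w"
  by (rule nth_equalityI) (auto simp: nth_act nth_append)

lemma prefix_act: "prefix t w \<Longrightarrow> prefix (act \<sigma> t) (act \<sigma> w)"
proof -
  assume "prefix t w"
  then obtain z where w: "w = t @ z" by (auto simp: prefix_def)
  have "act \<sigma> t = take (length t) (act \<sigma> w)"
    by (rule nth_equalityI) (auto simp: nth_act w nth_append)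
  then show ?thesis by (metis take_is_prefix)
qed

lemma act_tree_act_tree [simp]: "act_tree \<sigma> (act_tree \<sigma> T) = T"
  by (simp add: act_tree_def image_image)

lemma act_tree_silver_tree_of_subset:
  assumes "length \<sigma> \<le> length (v 0)"
  shows "act_tree \<sigma> (silver_tree_of v) \<subseteq> silver_tree_of (v(0 := act \<sigma> (v 0)))"
proof
  fix x assume "x \<in> act_tree \<sigma> (silver_tree_of v)"
  then obtain t where x: "x = act \<sigma> t" and t: "t \<in> silver_tree_of v"
    by (auto simp: act_tree_def)
  from t show "x \<in> silver_tree_of (v(0 := act \<sigma> (v 0)))"
  proof (cases rule: mem_silver_tree_ofE)
    case 1
    then show ?thesis using x prefix_act prefix_stem_mem_silver_tree_of by fastforce
  next
    case (2 i t')
    then show ?thesis using x assms branch_mem_silver_tree_of_iff[of "v(0 := act \<sigma> (v 0))"]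
      by (simp add: act_append)
  qed
qed

lemma act_tree_silver_tree_of:
  assumes "length \<sigma> \<le> length (v 0)"
  shows "act_tree \<sigma> (silver_tree_of v) = silver_tree_of (v(0 := act \<sigma> (v 0)))"
    (is "_ = silver_tree_of ?v")
proof
  have "act_tree \<sigma> (silver_tree_of ?v) \<subseteq> silver_tree_of (?v(0 := act \<sigma> (?v 0)))"
    using assms by (intro act_tree_silver_tree_of_subset) simp
  then have "act_tree \<sigma> (act_tree \<sigma> (silver_tree_of ?v)) \<subseteq> act_tree \<sigma> (silver_tree_of v)"
    by (simp add: act_tree_def image_mono)
  then show "silver_tree_of ?v \<subseteq> act_tree \<sigma> (silver_tree_of v)" by simp
qed (rule act_tree_silver_tree_of_subset[of \<sigma> v, OF assms])

definition diff_str :: "bool list \<Rightarrow> bool list \<Rightarrow> bool list" where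
  "diff_str a b = map2 (\<noteq>) a b"

lemma act_diff_str_append: "length a = length b \<Longrightarrow> act (diff_str a b) (a @ r) = b @ r"
  by (rule nth_equalityI) (auto simp: nth_act nth_append diff_str_def)

lemma act_tree_diff_str_silver_tree_of:
  assumes "length a = length b" and "v 0 = a @ r"
  shows "act_tree (diff_str a b) (silver_tree_of v) = silver_tree_of (v(0 := b @ r))"
proof -
  have "length (diff_str a b) \<le> length (v 0)"
    using assms by (simp add: diff_str_def)
  then show ?thesis
    using assms by (simp add: act_tree_silver_tree_of act_diff_str_append)
qed

lemma to_eq_act_tree_to:
  assumes "length s = length s0"
  shows "to (silver_tree_of u) s =
    act_tree (diff_str (to_seq u s0 0) (to_seq u s 0)) (to (silver_tree_of u) s0)"
proof -
  have "length (to_seq u s0 0) = length (to_seq u s 0)"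
    using assms by (intro length_to_seq) simp_all
  then show ?thesis
    using act_tree_diff_str_silver_tree_of[of "to_seq u s0 0" "to_seq u s 0" "to_seq u s0" "[]"]
      to_seq_eq_fun_upd_0[OF assms[symmetric], of u]
    by (simp add: to_silver_tree_of)
qed

lemma to1_in_forcing:
  assumes "silver_forcing P" and "T \<in> P"
  shows "to1 T i \<in> P"
proof -
  obtain u where T: "T = silver_tree_of u"
    using assms by (auto simp: silver_forcing_def silver_tree_def)
  have "stem T @ [i] \<in> T"
    by (simp add: T stem_silver_tree_of stem_snoc_mem_silver_tree_of)
  then show ?thesis using assms by (simp add: to1_def silver_forcing_def)
qed

lemma to_in_forcing: "silver_forcing P \<Longrightarrow> T \<in> P \<Longrightarrow> to T s \<in> P"
  by (induction s arbitrary: T) (simp_all add: to1_in_forcing)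

lemma to_in_forcing_iff_Col:
  assumes P: "silver_forcing P" and T: "silver_tree T" and s0: "length s0 = n"
  shows "to T s0 \<in> P \<longleftrightarrow> T \<in> Col n P"
proof
  assume "to T s0 \<in> P"
  moreover obtain u where "T = silver_tree_of u"
    using T by (auto simp: silver_tree_def)
  ultimately have "to T s \<in> P" if "length s = n" for s
    using to_eq_act_tree_to[of s s0 u] that P s0 by (simp add: silver_forcing_def)
  then show "T \<in> Col n P" using T by (simp add: Col_def)
qed (use s0 in \<open>simp add: Col_def\<close>)

text \<open>The gap-sequence form of \<open>V \<sqsubseteq>\<^sub>n U\<close>; the condition on the \<open>n\<close>-th gap makes every
  \<open>V \<rightarrow> s\<close> with \<open>|s| = n\<close> a subset of \<open>U \<rightarrow> s\<close>.\<close>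

definition seq_refines :: "nat \<Rightarrow> (nat \<Rightarrow> bool list) \<Rightarrow> (nat \<Rightarrow> bool list) \<Rightarrow> bool" where
  "seq_refines n v u \<longleftrightarrow>
     (\<forall>k<n. v k = u k) \<and> prefix (u n) (v n) \<and> silver_tree_of v \<subseteq> silver_tree_of u"

lemma seq_refines_refl: "seq_refines n u u"
  by (simp add: seq_refines_def)

lemma seq_refines_trans: "seq_refines n w v \<Longrightarrow> seq_refines n v u \<Longrightarrow> seq_refines n w u"
  unfolding seq_refines_def using prefix_order.trans by auto

lemma sqsub_if_seq_refines:
  "seq_refines n v u \<Longrightarrow> sqsub n (silver_tree_of v) (silver_tree_of u)"
  by (auto simp: seq_refines_def sqsub_def spl_silver_tree_of intro!: sum.cong)

lemma to_mono_if_seq_refines: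
  assumes "seq_refines n v u" and "length s = n"
  shows "to (silver_tree_of v) s \<subseteq> to (silver_tree_of u) s"
proof -
  obtain r where "v n = u n @ r"
    using assms(1) by (auto simp: seq_refines_def prefix_def)
  then have "to_seq v s 0 = to_seq u s 0 @ r"
    using assms by (intro to_seq_0_append) (auto simp: seq_refines_def)
  then show ?thesis
    using assms(1) unfolding to_eq_restr seq_refines_def by (intro restr_mono) auto
qed

definition graft ::
    "nat \<Rightarrow> (nat \<Rightarrow> bool list) \<Rightarrow> bool list \<Rightarrow> (nat \<Rightarrow> bool list) \<Rightarrow> nat \<Rightarrow> bool list" where
  "graft n u r v k = (if k < n then u k else if k = n then u n @ r else v (k - n))"

lemma to_seq_graft:
  assumes "length s = n"
  shows "to_seq (graft n u r v) s = v(0 := to_seq u s 0 @ r)"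
proof
  fix k
  show "to_seq (graft n u r v) s k = (v(0 := to_seq u s 0 @ r)) k"
  proof (cases k)
    case 0
    have "to_seq (graft n u r v) s 0 = to_seq u s 0 @ r"
      by (rule to_seq_0_append) (simp_all add: graft_def assms)
    with 0 show ?thesis by simp
  qed (simp add: to_seq_Suc graft_def assms)
qed

lemma seq_refinement_with_to_eq:
  assumes P: "silver_forcing P" and s0: "length s0 = n"
    and S: "S \<in> P" and S_sub: "S \<subseteq> to (silver_tree_of u) s0"
  shows "\<exists>w. silver_tree_of w \<in> Col n P \<and> seq_refines n w u \<and> to (silver_tree_of w) s0 = S"
proof -
  obtain v where v: "S = silver_tree_of v"
    using P S by (auto simp: silver_forcing_def silver_tree_def)
  have "prefix (to_seq u s0 0) (v 0)"
    using S_sub by (intro prefix_stem_if_silver_tree_of_subset) (simp add: v to_silver_tree_of)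
  then obtain r where v0: "v 0 = to_seq u s0 0 @ r"
    by (auto simp: prefix_def)
  define w where "w = graft n u r v"
  define \<sigma> where "\<sigma> s = diff_str (to_seq u s0 0) (to_seq u s 0)" for s
  have to_w: "to (silver_tree_of w) s = act_tree (\<sigma> s) S" if "length s = n" for s
  proof -
    have "length (to_seq u s0 0) = length (to_seq u s 0)"
      using that s0 by (intro length_to_seq) simp_all
    then show ?thesis using that v0
      by (simp add: v w_def \<sigma>_def to_silver_tree_of to_seq_graft act_tree_diff_str_silver_tree_of)
  qed
  have "to (silver_tree_of w) s0 = S"
    using s0 v0[symmetric] by (simp add: v w_def to_silver_tree_of to_seq_graft)
  moreover have "silver_tree_of w \<in> Col n P"
    using to_w P S by (auto simp: Col_def silver_tree_def silver_forcing_def)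
  moreover have "silver_tree_of w \<subseteq> silver_tree_of u"
  proof
    fix t assume "t \<in> silver_tree_of w"
    then obtain s where s: "length s = n" "t \<in> to (silver_tree_of w) s"
      using mem_to_silver_tree_of by blast
    then have "t \<in> act_tree (\<sigma> s) (to (silver_tree_of u) s0)"
      using to_w S_sub by (auto simp: act_tree_def)
    also have "\<dots> = to (silver_tree_of u) s"
      using to_eq_act_tree_to[of s s0 u] s(1) s0 by (simp add: \<sigma>_def)
    finally show "t \<in> silver_tree_of u"
      using to_subset by blast
  qed
  then have "seq_refines n w u"
    by (simp add: seq_refines_def w_def graft_def)
  ultimately show ?thesis by blast
qed

lemma seq_refinement_to_in_dense:
  assumes P: "silver_forcing P" and D: "open_dense P D"
    and U: "silver_tree_of u \<in> Col n P" and s: "length s = n"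
  shows "\<exists>w. silver_tree_of w \<in> Col n P \<and> seq_refines n w u \<and> to (silver_tree_of w) s \<in> D"
proof -
  have "to (silver_tree_of u) s \<in> P"
    using U s by (simp add: Col_def)
  then obtain S where "S \<in> D" "S \<subseteq> to (silver_tree_of u) s"
    using D by (auto simp: open_dense_def)
  moreover from \<open>S \<in> D\<close> have "S \<in> P"
    using D by (auto simp: open_dense_def)
  ultimately show ?thesis
    using seq_refinement_with_to_eq[OF P s] by metis
qed

lemma seq_refinement_all_to_in_dense:
  assumes P: "silver_forcing P" and D: "open_dense P D" and U: "silver_tree_of u \<in> Col n P"
  shows "\<exists>w. silver_tree_of w \<in> Col n P \<and> seq_refines n w u \<and>
    (\<forall>s. length s = n \<longrightarrow> to (silver_tree_of w) s \<in> D)"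
proof -
  have refinement_for_finite: "\<exists>w. silver_tree_of w \<in> Col n P \<and> seq_refines n w u \<and>
      (\<forall>s\<in>F. to (silver_tree_of w) s \<in> D)"
    if "finite F" "F \<subseteq> {s. length s = n}" for F
    using that
  proof (induction F rule: finite_subset_induct')
    case empty
    then show ?case using U seq_refines_refl by blast
  next
    case (insert s F)
    then obtain w1 where w1: "silver_tree_of w1 \<in> Col n P" "seq_refines n w1 u"
      "\<forall>s'\<in>F. to (silver_tree_of w1) s' \<in> D"
      by blast
    obtain w2 where w2: "silver_tree_of w2 \<in> Col n P" "seq_refines n w2 w1"
      "to (silver_tree_of w2) s \<in> D"
      using seq_refinement_to_in_dense[OF P D w1(1)] insert.hyps(2) by blast
    have "to (silver_tree_of w2) s' \<in> D" if "s' \<in> F" for s'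
    proof -
      have "length s' = n" using that insert.hyps(3) by blast
      then have "to (silver_tree_of w2) s' \<subseteq> to (silver_tree_of w1) s'"
        "to (silver_tree_of w2) s' \<in> P"
        using to_mono_if_seq_refines[OF w2(2)] w2(1) by (simp_all add: Col_def)
      then show ?thesis using w1(3) that D by (auto simp: open_dense_def)
    qed
    then show ?case using w2 seq_refines_trans[OF w2(2) w1(2)] by blast
  qed
  have "finite {s :: bool list. length s = n}"
    using finite_lists_length_eq[of "UNIV :: bool set"] by simp
  from refinement_for_finite[OF this subset_refl] show ?thesis by simp
qed

theorem lemma6p6:
  fixes P :: "bool list set set" and n :: nat
  assumes "silver_forcing P"
  shows "(\<forall>T\<in>P. \<forall>s. to T s \<in> P)
    \<and> (\<forall>T s0. silver_tree T \<and> length s0 = n \<longrightarrow> (to T s0 \<in> P \<longleftrightarrow> T \<in> Col n P))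
    \<and> (\<forall>U s0 S. U \<in> Col n P \<and> length s0 = n \<and> S \<in> P \<and> S \<subseteq> to U s0 \<longrightarrow>
           (\<exists>V\<in>Col n P. sqsub n V U \<and> to V s0 = S))
    \<and> (\<forall>U D. U \<in> Col n P \<and> open_dense P D \<longrightarrow>
           (\<exists>V\<in>Col n P. sqsub n V U \<and> (\<forall>s. length s = n \<longrightarrow> to V s \<in> D)))"
proof (intro conjI allI impI ballI)
  fix T s assume "T \<in> P"
  then show "to T s \<in> P" using to_in_forcing[OF assms] by blast
next
  fix T and s0 :: "bool list" assume "silver_tree T \<and> length s0 = n"
  then show "to T s0 \<in> P \<longleftrightarrow> T \<in> Col n P" using to_in_forcing_iff_Col[OF assms] by blast
next
  fix U S and s0 :: "bool list" assume "U \<in> Col n P \<and> length s0 = n \<and> S \<in> P \<and> S \<subseteq> to U s0"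
  moreover from this obtain u where "U = silver_tree_of u"
    by (auto simp: Col_def silver_tree_def)
  ultimately show "\<exists>V\<in>Col n P. sqsub n V U \<and> to V s0 = S"
    using seq_refinement_with_to_eq[OF assms] sqsub_if_seq_refines by metis
next
  fix U D assume "U \<in> Col n P \<and> open_dense P D"
  moreover from this obtain u where "U = silver_tree_of u"
    by (auto simp: Col_def silver_tree_def)
  ultimately show "\<exists>V\<in>Col n P. sqsub n V U \<and> (\<forall>s. length s = n \<longrightarrow> to V s \<in> D)"
    using seq_refinement_all_to_in_dense[OF assms] sqsub_if_seq_refines by metis
qed

end
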